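(* Let $F=\{F^{(1)},\ldots,F^{(k)}\}$ be an SNRE of degree $(d,k)$. There exists an algorithm which, given $F$ (i.e. the coefficients of the polynomials $F^{(1)},\ldots,F^{(k)}$), determines the set $\mathcal{E}(F)$ of essential symbols and the set $\mathcal{I}(F)$ of inessential symbols, and this algorithm halts within $k$ steps.
   Context: An SNRE of degree $(d,k)$ consists of $k$ nonzero homogeneous polynomials $F^{(1)},\ldots,F^{(k)}$ of degree $d$ in $k$ variables $x_1,\dots,x_k$ with nonnegative integer coefficients, together with the sequences defined by $\gamma_{i;0}=1$ and $\gamma_{i;n}=F^{(i)}(\gamma_{1;n-1},\ldots,\gamma_{k;n-1})$ for $n\ge1$ (the symbols are $1,\dots,k$). Symbol $i$ induces $j$ ($i\to j$) if $x_j$ occurs in some monomial of $F^{(i)}$ with nonzero coefficient. A symbol $i$ is essential if $\gamma_{i;n}\ge 2$ for some $n\in\mathbb{N}$ and inessential otherwise (i.e. $\gamma_{i;n}=1$ for all $n$); $\mathcal{E}(F)$ and $\mathcal{I}(F)$ denote the sets of essential and inessential symbols. *)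

theory Defs
  imports Main
begin

(* Symbols are 0,...,k-1 (the paper's 1..k shifted by one).
   A homogeneous polynomial of degree d in x_0..x_{k-1} with nonnegative integer
   coefficients is given by its coefficient function on exponent vectors alpha. *)

definition mons :: "nat \<Rightarrow> nat \<Rightarrow> (nat \<Rightarrow> nat) set" where
  "mons k d = {\<alpha>. (\<forall>j. k \<le> j \<longrightarrow> \<alpha> j = 0) \<and> (\<Sum>j<k. \<alpha> j) = d}"

(* c i alpha = coefficient of x^alpha in F^(i) *)
definition is_SNRE :: "nat \<Rightarrow> nat \<Rightarrow> (nat \<Rightarrow> (nat \<Rightarrow> nat) \<Rightarrow> nat) \<Rightarrow> bool" where
  "is_SNRE d k c \<longleftrightarrow>
     (\<forall>i<k. \<forall>\<alpha>. \<alpha> \<notin> mons k d \<longrightarrow> c i \<alpha> = 0) \<and>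
     (\<forall>i<k. \<exists>\<alpha>. c i \<alpha> \<noteq> 0)"

definition evalF :: "nat \<Rightarrow> nat \<Rightarrow> (nat \<Rightarrow> (nat \<Rightarrow> nat) \<Rightarrow> nat) \<Rightarrow> nat \<Rightarrow> (nat \<Rightarrow> nat) \<Rightarrow> nat" where
  "evalF d k c i x = (\<Sum>\<alpha>\<in>mons k d. c i \<alpha> * (\<Prod>j<k. x j ^ \<alpha> j))"

primrec gamma :: "nat \<Rightarrow> nat \<Rightarrow> (nat \<Rightarrow> (nat \<Rightarrow> nat) \<Rightarrow> nat) \<Rightarrow> nat \<Rightarrow> nat \<Rightarrow> nat" where
  "gamma d k c 0 = (\<lambda>i. 1)"
| "gamma d k c (Suc n) = (\<lambda>i. evalF d k c i (gamma d k c n))"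

definition essential_set :: "nat \<Rightarrow> nat \<Rightarrow> (nat \<Rightarrow> (nat \<Rightarrow> nat) \<Rightarrow> nat) \<Rightarrow> nat set" where
  "essential_set d k c = {i. i < k \<and> (\<exists>n. gamma d k c n i \<ge> 2)}"

definition inessential_set :: "nat \<Rightarrow> nat \<Rightarrow> (nat \<Rightarrow> (nat \<Rightarrow> nat) \<Rightarrow> nat) \<Rightarrow> nat set" where
  "inessential_set d k c = {i. i < k \<and> (\<forall>n. gamma d k c n i = 1)}"

definition induces :: "nat \<Rightarrow> nat \<Rightarrow> (nat \<Rightarrow> (nat \<Rightarrow> nat) \<Rightarrow> nat) \<Rightarrow> nat \<Rightarrow> nat \<Rightarrow> bool" where
  "induces d k c i j \<longleftrightarrow> (\<exists>\<alpha>\<in>mons k d. c i \<alpha> \<noteq> 0 \<and> 0 < \<alpha> j)"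

definition alg_init :: "nat \<Rightarrow> nat \<Rightarrow> (nat \<Rightarrow> (nat \<Rightarrow> nat) \<Rightarrow> nat) \<Rightarrow> nat set" where
  "alg_init d k c = {i. i < k \<and> 2 \<le> evalF d k c i (\<lambda>_. 1)}"

definition alg_step :: "nat \<Rightarrow> nat \<Rightarrow> (nat \<Rightarrow> (nat \<Rightarrow> nat) \<Rightarrow> nat) \<Rightarrow> nat set \<Rightarrow> nat set" where
  "alg_step d k c S = S \<union> {i. i < k \<and> (\<exists>j\<in>S. induces d k c i j)}"

definition alg :: "nat \<Rightarrow> nat \<Rightarrow> (nat \<Rightarrow> (nat \<Rightarrow> nat) \<Rightarrow> nat) \<Rightarrow> nat \<Rightarrow> nat set" where
  "alg d k c m = (alg_step d k c ^^ m) (alg_init d k c)"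

end

theory Submission
  imports Defs "HOL-Library.FuncSet"
begin

text \<open>All values \<open>\<gamma>(j,n)\<close> are at least 1, so \<open>F\<^sup>(\<^sup>i\<^sup>)(\<gamma>(\<cdot>,n))\<close> can exceed
  \<open>F\<^sup>(\<^sup>i\<^sup>)(1,\<dots>,1)\<close> only if some variable \<open>x\<^sub>j\<close> occurring in \<open>F\<^sup>(\<^sup>i\<^sup>)\<close> has
  \<open>\<gamma>(j,n) \<ge> 2\<close>, and then it is itself at least 2. Hence \<open>\<gamma>(i,n+1) \<ge> 2\<close> iff
  \<open>F\<^sup>(\<^sup>i\<^sup>)(1,\<dots>,1) \<ge> 2\<close> or \<open>i\<close> induces a symbol \<open>j\<close> with \<open>\<gamma>(j,n) \<ge> 2\<close>, so the
  essential symbols form the least set containing those with \<open>F\<^sup>(\<^sup>i\<^sup>)(1,\<dots>,1) \<ge> 2\<close>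
  and closed under being induced into. The algorithm reaches this set by an
  increasing iteration inside \<open>{0..<k}\<close>; it grows strictly until it is stable,
  so it is stable after \<open>k\<close> steps.\<close>

lemma finite_mons: "finite (mons k d)"
proof -
  let ?ext = "\<lambda>f j. if j < k then f j else 0"
  have "mons k d \<subseteq> ?ext ` (Pi\<^sub>E {..<k} (\<lambda>_. {..d}))"
  proof
    fix \<alpha> assume "\<alpha> \<in> mons k d"
    hence zero: "\<forall>j. k \<le> j \<longrightarrow> \<alpha> j = 0" and sum: "(\<Sum>j<k. \<alpha> j) = d"
      by (auto simp: mons_def)
    have "\<alpha> j \<le> d" if "j < k" for j
      using sum member_le_sum[of j "{..<k}" \<alpha>] that by auto
    hence "restrict \<alpha> {..<k} \<in> Pi\<^sub>E {..<k} (\<lambda>_. {..d})"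
      by (simp add: restrict_PiE_iff)
    moreover have "\<alpha> = ?ext (restrict \<alpha> {..<k})"
      using zero by (auto simp: fun_eq_iff)
    ultimately show "\<alpha> \<in> ?ext ` (Pi\<^sub>E {..<k} (\<lambda>_. {..d}))" by blast
  qed
  moreover have "finite (Pi\<^sub>E {..<k} (\<lambda>_. {..d::nat}))" by (rule finite_PiE) auto
  ultimately show ?thesis by (rule finite_subset[OF _ finite_imageI])
qed

lemma evalF_term_le:
  assumes "\<alpha> \<in> mons k d"
  shows "c i \<alpha> * (\<Prod>j<k. x j ^ \<alpha> j) \<le> evalF d k c i x"
  unfolding evalF_def using assms finite_mons by (intro member_le_sum) auto

lemma evalF_mono:
  assumes "\<forall>j<k. x j \<le> y j"
  shows "evalF d k c i x \<le> evalF d k c i y"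
  unfolding evalF_def
proof (intro sum_mono mult_le_mono2 prod_mono conjI)
  fix \<alpha> j assume "j \<in> {..<k}"
  thus "x j ^ \<alpha> j \<le> y j ^ \<alpha> j" using assms by (simp add: power_mono)
qed simp

lemma evalF_ge_1:
  assumes "is_SNRE d k c" "i < k" "\<forall>j<k. 1 \<le> x j"
  shows "1 \<le> evalF d k c i x"
proof -
  obtain \<alpha> where c: "c i \<alpha> \<noteq> 0"
    using assms(1,2) unfolding is_SNRE_def by auto
  have m: "\<alpha> \<in> mons k d"
    using assms(1,2) c unfolding is_SNRE_def by metis
  have "1 \<le> (\<Prod>j<k. x j ^ \<alpha> j)"
    using assms(3) by (intro prod_ge_1) auto
  hence "1 \<le> c i \<alpha> * (\<Prod>j<k. x j ^ \<alpha> j)"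
    using c by simp
  also have "\<dots> \<le> evalF d k c i x" by (rule evalF_term_le[OF m])
  finally show ?thesis .
qed

lemma gamma_ge_1:
  assumes "is_SNRE d k c" "j < k"
  shows "1 \<le> gamma d k c n j"
  using assms(2)
proof (induction n arbitrary: j)
  case (Suc n)
  thus ?case using evalF_ge_1[OF assms(1) Suc.prems, of "gamma d k c n"] Suc.IH by simp
qed simp

lemma induces_imp_less: "induces d k c i j \<Longrightarrow> j < k"
proof (rule ccontr)
  assume "induces d k c i j" "\<not> j < k"
  then obtain \<alpha> where "\<alpha> \<in> mons k d" "0 < \<alpha> j" unfolding induces_def by blast
  with \<open>\<not> j < k\<close> show False unfolding mons_def by simp
qed

lemma evalF_ge_2_if_induces:
  assumes "induces d k c i j" "\<forall>l<k. 1 \<le> x l" "2 \<le> x j"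
  shows "2 \<le> evalF d k c i x"
proof -
  obtain \<alpha> where m: "\<alpha> \<in> mons k d" and c: "c i \<alpha> \<noteq> 0" and pos: "0 < \<alpha> j"
    using assms(1) by (auto simp: induces_def)
  let ?rest = "\<Prod>l\<in>{..<k}-{j}. x l ^ \<alpha> l"
  have "(\<Prod>l<k. x l ^ \<alpha> l) = x j ^ \<alpha> j * ?rest"
    using induces_imp_less[OF assms(1)] by (intro prod.remove) auto
  moreover have "1 \<le> ?rest"
    using assms(2) by (intro prod_ge_1) auto
  moreover have "x j \<le> x j ^ \<alpha> j"
    using pos assms(3) by (intro self_le_power) auto
  ultimately have "2 \<le> (\<Prod>l<k. x l ^ \<alpha> l)"
    using assms(3) mult_le_mono[of 2 "x j ^ \<alpha> j" 1 ?rest] by linarith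
  hence "2 \<le> c i \<alpha> * (\<Prod>l<k. x l ^ \<alpha> l)"
    using c mult_le_mono[of 1 "c i \<alpha>" 2] by fastforce
  also have "\<dots> \<le> evalF d k c i x" by (rule evalF_term_le[OF m])
  finally show ?thesis .
qed

lemma evalF_eq_ones_if_induced_eq_1:
  assumes "\<And>j. induces d k c i j \<Longrightarrow> x j = 1"
  shows "evalF d k c i x = evalF d k c i (\<lambda>_. 1)"
  unfolding evalF_def
proof (rule sum.cong[OF refl])
  fix \<alpha> assume m: "\<alpha> \<in> mons k d"
  have "x j ^ \<alpha> j = 1" if "c i \<alpha> \<noteq> 0" for j
    using assms[of j] m that by (cases "\<alpha> j = 0") (auto simp: induces_def)
  thus "c i \<alpha> * (\<Prod>j<k. x j ^ \<alpha> j) = c i \<alpha> * (\<Prod>j<k. 1 ^ \<alpha> j)"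
    by (cases "c i \<alpha> = 0") (simp_all add: prod.neutral)
qed

lemma gamma_Suc_ge_2_iff:
  assumes "is_SNRE d k c" "i < k"
  shows "2 \<le> gamma d k c (Suc n) i \<longleftrightarrow>
         i \<in> alg_init d k c \<or> (\<exists>j. induces d k c i j \<and> 2 \<le> gamma d k c n j)"
proof
  have ge1: "\<forall>j<k. 1 \<le> gamma d k c n j"
    using gamma_ge_1[OF assms(1)] by blast
  assume ge2: "2 \<le> gamma d k c (Suc n) i"
  show "i \<in> alg_init d k c \<or> (\<exists>j. induces d k c i j \<and> 2 \<le> gamma d k c n j)"
  proof (rule ccontr)
    assume "\<not> ?thesis"
    hence "gamma d k c n j = 1" if "induces d k c i j" for j
      using that ge1 induces_imp_less[OF that] by fastforce
    hence "evalF d k c i (gamma d k c n) = evalF d k c i (\<lambda>_. 1)"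
      by (rule evalF_eq_ones_if_induced_eq_1)
    with ge2 \<open>\<not> ?thesis\<close> assms(2) show False by (simp add: alg_init_def)
  qed
next
  assume "i \<in> alg_init d k c \<or> (\<exists>j. induces d k c i j \<and> 2 \<le> gamma d k c n j)"
  thus "2 \<le> gamma d k c (Suc n) i"
  proof
    assume "i \<in> alg_init d k c"
    moreover have "evalF d k c i (\<lambda>_. 1) \<le> evalF d k c i (gamma d k c n)"
      using gamma_ge_1[OF assms(1)] by (intro evalF_mono) simp
    ultimately show ?thesis by (simp add: alg_init_def)
  qed (use gamma_ge_1[OF assms(1)] evalF_ge_2_if_induces in auto)
qed

lemma alg_subset_essential_set:
  assumes "is_SNRE d k c"
  shows "alg d k c m \<subseteq> essential_set d k c"
proof (induction m)
  case 0
  have "i \<in> essential_set d k c" if "i \<in> alg_init d k c" for i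
  proof -
    have "i < k" using that by (simp add: alg_init_def)
    hence "2 \<le> gamma d k c (Suc 0) i"
      using that gamma_Suc_ge_2_iff[OF assms] by blast
    with \<open>i < k\<close> show ?thesis unfolding essential_set_def by blast
  qed
  thus ?case by (auto simp: alg_def)
next
  case (Suc m)
  have "i \<in> essential_set d k c"
    if ik: "i < k" and ij: "induces d k c i j" and "j \<in> essential_set d k c" for i j
  proof -
    obtain n where "2 \<le> gamma d k c n j"
      using \<open>j \<in> essential_set d k c\<close> by (auto simp: essential_set_def)
    hence "2 \<le> gamma d k c (Suc n) i"
      using ij gamma_Suc_ge_2_iff[OF assms ik] by blast
    with ik show ?thesis unfolding essential_set_def by blast
  qed
  with Suc.IH show ?case by (auto simp: alg_def alg_step_def)
qed

lemma essential_set_subset_if_closed: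
  assumes "is_SNRE d k c" "alg_init d k c \<subseteq> S" "alg_step d k c S \<subseteq> S"
  shows "essential_set d k c \<subseteq> S"
proof -
  have "i \<in> S" if "i < k" "2 \<le> gamma d k c n i" for n i
    using that
  proof (induction n arbitrary: i)
    case (Suc n)
    hence "i \<in> alg_init d k c \<or> (\<exists>j. induces d k c i j \<and> 2 \<le> gamma d k c n j)"
      using gamma_Suc_ge_2_iff[OF assms(1)] by blast
    thus ?case
    proof
      assume "\<exists>j. induces d k c i j \<and> 2 \<le> gamma d k c n j"
      then obtain j where "induces d k c i j" "j \<in> S"
        using Suc.IH induces_imp_less by blast
      hence "i \<in> alg_step d k c S" using \<open>i < k\<close> by (auto simp: alg_step_def)
      thus "i \<in> S" using assms(3) by blast
    qed (use assms(2) in blast)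
  qed simp
  thus ?thesis by (auto simp: essential_set_def)
qed

lemma inessential_set_eq:
  assumes "is_SNRE d k c"
  shows "inessential_set d k c = {i. i < k \<and> i \<notin> essential_set d k c}"
proof -
  have "gamma d k c n i = 1 \<longleftrightarrow> \<not> 2 \<le> gamma d k c n i" if "i < k" for i n
    using gamma_ge_1[OF assms that, of n] by linarith
  thus ?thesis by (auto simp: inessential_set_def essential_set_def)
qed

lemma funpow_inflationary_card_fixpoint:
  fixes f :: "'a set \<Rightarrow> 'a set"
  assumes inflationary: "\<And>S. S \<subseteq> f S" and bounded: "\<And>S. S \<subseteq> A \<Longrightarrow> f S \<subseteq> A"
    and "finite A" "S \<subseteq> A"
  shows "f ((f ^^ card A) S) = (f ^^ card A) S"
proof -
  have iter_subset: "(f ^^ m) S \<subseteq> A" for m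
    by (induction m) (simp_all add: assms(4) bounded)
  have grows: "f ((f ^^ m) S) = (f ^^ m) S \<or> m \<le> card ((f ^^ m) S)" for m
  proof (induction m)
    case (Suc m)
    show ?case
    proof (cases "f ((f ^^ m) S) = (f ^^ m) S")
      case False
      hence "(f ^^ m) S \<subset> (f ^^ Suc m) S" using inflationary by auto
      hence "card ((f ^^ m) S) < card ((f ^^ Suc m) S)"
        by (rule psubset_card_mono[OF finite_subset[OF iter_subset \<open>finite A\<close>]])
      with False Suc.IH show ?thesis by simp
    qed simp
  qed simp
  show ?thesis
  proof (cases "card A \<le> card ((f ^^ card A) S)")
    case True
    hence "(f ^^ card A) S = A"
      using card_seteq[OF \<open>finite A\<close> iter_subset] by blast
    thus ?thesis using inflationary bounded by (metis subset_antisym order_refl)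
  qed (use grows in blast)
qed

lemma alg_init_subset_alg: "alg_init d k c \<subseteq> alg d k c m"
  by (induction m) (auto simp: alg_def alg_step_def)

lemma alg_step_alg_fixpoint: "alg_step d k c (alg d k c k) = alg d k c k"
proof -
  have "alg_step d k c (alg d k c (card {..<k})) = alg d k c (card {..<k})"
    unfolding alg_def
    by (rule funpow_inflationary_card_fixpoint) (auto simp: alg_step_def alg_init_def)
  thus ?thesis by simp
qed

theorem theorem2:
  fixes d k :: nat and c :: "nat \<Rightarrow> (nat \<Rightarrow> nat) \<Rightarrow> nat"
  assumes "is_SNRE d k c"
  shows "alg_step d k c (alg d k c k) = alg d k c k
       \<and> alg d k c k = essential_set d k c
       \<and> {i. i < k \<and> i \<notin> alg d k c k} = inessential_set d k c"
proof -
  have fixpoint: "alg_step d k c (alg d k c k) = alg d k c k"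
    by (rule alg_step_alg_fixpoint)
  have "alg_init d k c \<subseteq> alg d k c k"
    by (rule alg_init_subset_alg)
  hence "essential_set d k c \<subseteq> alg d k c k"
    using essential_set_subset_if_closed[OF assms] fixpoint by simp
  hence essential: "alg d k c k = essential_set d k c"
    using alg_subset_essential_set[OF assms] by blast
  show ?thesis
    using fixpoint essential inessential_set_eq[OF assms] by simp
qed

end
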